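(* Let $Z$ be the incidence matrix of the finite poset $\Phi_6((12)(3456))$ (with the pointwise order). Then $\phi_9\big((12)(345)(6789)\big)$ equals the sum of all entries of $Z^3$ (equivalently, the number of chains $a_1\le a_2\le a_3\le a_4$ in $\Phi_6((12)(3456))$), and its value is $22062570$.
   Context: $B=\{0,1\}$ with $0\le1$; $B^n$ is ordered componentwise; $D_n$ is the set of monotone functions $B^n\to B$, ordered pointwise. $S_n$ acts on $D_n$ by $(\pi f)(x_1,\dots,x_n)=f(x_{\pi(1)},\dots,x_{\pi(n)})$. For $\pi\in S_n$, $\Phi_n(\pi)=\{f\in D_n:\pi f=f\}$ and $\phi_n(\pi)=|\Phi_n(\pi)|$. Note $\phi_n(\pi)$ depends only on the cycle type of $\pi$. The incidence matrix of a finite poset $(X,\le)$ with elements $x_1,\dots,x_m$ is the $m\times m$ matrix $M$ with $M_{i,j}=1$ if $x_i\le x_j$ and $0$ otherwise. *)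

theory Defs
  imports "HOL-Combinatorics.Cycles"
begin

text \<open>Points of B^n: boolean vectors indexed by 1..n, represented as
  functions nat => bool that are False outside {1..n}.\<close>
definition cube :: "nat \<Rightarrow> (nat \<Rightarrow> bool) set" where
  "cube n = {x. \<forall>i. i \<notin> {1..n} \<longrightarrow> \<not> x i}"

definition D :: "nat \<Rightarrow> ((nat \<Rightarrow> bool) \<Rightarrow> bool) set" where
  "D n = {f. (\<forall>x\<in>cube n. \<forall>y\<in>cube n. x \<le> y \<longrightarrow> f x \<le> f y)
             \<and> (\<forall>x. x \<notin> cube n \<longrightarrow> f x = False)}"

definition act :: "(nat \<Rightarrow> nat) \<Rightarrow> ((nat \<Rightarrow> bool) \<Rightarrow> bool) \<Rightarrow> ((nat \<Rightarrow> bool) \<Rightarrow> bool)" where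
  "act \<pi> f = (\<lambda>x. f (x \<circ> \<pi>))"

definition Phi :: "nat \<Rightarrow> (nat \<Rightarrow> nat) \<Rightarrow> ((nat \<Rightarrow> bool) \<Rightarrow> bool) set" where
  "Phi n \<pi> = {f \<in> D n. act \<pi> f = f}"

definition phi :: "nat \<Rightarrow> (nat \<Rightarrow> nat) \<Rightarrow> nat" where
  "phi n \<pi> = card (Phi n \<pi>)"

definition incidence :: "'a::ord set \<Rightarrow> 'a \<Rightarrow> 'a \<Rightarrow> nat" where
  "incidence X a b = (if a \<le> b then 1 else 0)"

definition mmul :: "'a set \<Rightarrow> ('a \<Rightarrow> 'a \<Rightarrow> nat) \<Rightarrow> ('a \<Rightarrow> 'a \<Rightarrow> nat) \<Rightarrow> 'a \<Rightarrow> 'a \<Rightarrow> nat" where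
  "mmul X A B a c = (\<Sum>b\<in>X. A a b * B b c)"

fun mpow :: "'a set \<Rightarrow> ('a \<Rightarrow> 'a \<Rightarrow> nat) \<Rightarrow> nat \<Rightarrow> 'a \<Rightarrow> 'a \<Rightarrow> nat" where
  "mpow X A 0 = (\<lambda>a b. if a = b then 1 else 0)"
| "mpow X A (Suc k) = mmul X (mpow X A k) A"

definition entry_sum :: "'a set \<Rightarrow> ('a \<Rightarrow> 'a \<Rightarrow> nat) \<Rightarrow> nat" where
  "entry_sum X A = (\<Sum>a\<in>X. \<Sum>b\<in>X. A a b)"

end

(*
  A function f in D_9 fixed by pi = (12)(345)(6789) is also fixed by pi^4 = (345) and by
  pi^9 = (12)(6789).  Hence f(x) depends only on the number k of ones among x3, x4, x5 and on
  the remaining six coordinates, on which pi^9 acts as sigma = (12)(3456).  The slices a_k of f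
  (k = 0, ..., 3) form a chain a_0 <= a_1 <= a_2 <= a_3 in Phi_6(sigma), and every such chain
  comes from exactly one f; in any finite poset, 4-chains are counted by the entries of the cube
  of the incidence matrix.

  A 4-chain is determined by its height h(x) = #{k. a_k(x)}, a monotone sigma-invariant map from
  B^6 to {0, ..., 4}.  Restricting h to representatives (y1, y2, r) of the 22 orbits of sigma, where
  r runs over the six rotation classes of 4-bit words, turns h into six 2x2 blocks of values subject
  to componentwise inequalities.  Once the two middle blocks are fixed, the remaining blocks below
  and above them can be chosen independently, and the count reduces to a sum over 105 x 105 pairs
  of blocks of products of small tabulated numbers.
*)

theory Submission
  imports Defs "HOL-Library.Product_Order"
begin

section \<open>Chains and powers of the incidence matrix\<close>

definition chains4 :: "'a::ord set \<Rightarrow> ('a \<times> 'a \<times> 'a \<times> 'a) set" where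
  "chains4 X = {(a1, a2, a3, a4). a1 \<in> X \<and> a2 \<in> X \<and> a3 \<in> X \<and> a4 \<in> X \<and> a1 \<le> a2 \<and> a2 \<le> a3 \<and> a3 \<le> a4}"

lemma mpow_3_apply:
  assumes "finite X" "a \<in> X"
  shows "mpow X A 3 a d = (\<Sum>c\<in>X. \<Sum>b\<in>X. A a b * A b c * A c d)"
  using assms by (simp add: numeral_3_eq_3 mmul_def sum_distrib_right if_distrib[of "\<lambda>u. u * _"]
      sum.delta cong: if_cong)

lemma incidence_product:
  "incidence X a b * incidence X b c * incidence X c d = (if a \<le> b \<and> b \<le> c \<and> c \<le> d then 1 else 0)"
  by (simp add: incidence_def)

lemma entry_sum_incidence_cube:
  fixes X :: "'a::ord set"
  assumes fin: "finite X"
  shows "entry_sum X (mpow X (incidence X) 3) = card (chains4 X)"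
proof -
  let ?I = "incidence X"
  have "entry_sum X (mpow X ?I 3) = (\<Sum>a\<in>X. \<Sum>d\<in>X. \<Sum>c\<in>X. \<Sum>b\<in>X. ?I a b * ?I b c * ?I c d)"
    unfolding entry_sum_def using fin by (simp add: mpow_3_apply)
  also have "\<dots> = (\<Sum>a\<in>X. \<Sum>b\<in>X. \<Sum>c\<in>X. \<Sum>d\<in>X. ?I a b * ?I b c * ?I c d)"
    by (subst sum.swap, subst (2) sum.swap, subst sum.swap) (rule refl)
  also have "\<dots> = (\<Sum>a\<in>X. \<Sum>b\<in>X. \<Sum>c\<in>X. card {d \<in> X. a \<le> b \<and> b \<le> c \<and> c \<le> d})"
    using fin by (simp add: incidence_product sum.inter_filter[symmetric])
  also have "\<dots> = card (chains4 X)"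
  proof -
    have "chains4 X = (SIGMA a:X. SIGMA b:X. SIGMA c:X. {d \<in> X. a \<le> b \<and> b \<le> c \<and> c \<le> d})"
      by (auto simp: chains4_def)
    then show ?thesis using fin by (simp add: card_SigmaI)
  qed
  finally show ?thesis .
qed

lemma D_memI:
  assumes "\<And>x y. x \<in> cube n \<Longrightarrow> y \<in> cube n \<Longrightarrow> x \<le> y \<Longrightarrow> f x \<Longrightarrow> f y"
    and "\<And>x. x \<notin> cube n \<Longrightarrow> \<not> f x"
  shows "f \<in> D n"
  using assms unfolding D_def by (auto simp: le_bool_def)

lemma D_monoD: "f \<in> D n \<Longrightarrow> x \<in> cube n \<Longrightarrow> y \<in> cube n \<Longrightarrow> x \<le> y \<Longrightarrow> f x \<Longrightarrow> f y"
  unfolding D_def by (auto simp: le_bool_def)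

lemma D_outside: "f \<in> D n \<Longrightarrow> x \<notin> cube n \<Longrightarrow> \<not> f x"
  unfolding D_def by auto

lemma Phi_memI: "f \<in> D n \<Longrightarrow> (\<And>x. f (x \<circ> \<pi>) = f x) \<Longrightarrow> f \<in> Phi n \<pi>"
  unfolding Phi_def act_def by auto

lemma Phi_invariant: "f \<in> Phi n \<pi> \<Longrightarrow> f (x \<circ> \<pi>) = f x"
  unfolding Phi_def act_def by (metis (mono_tags, lifting) mem_Collect_eq)

lemma Phi_funpow_invariant: "f \<in> Phi n \<pi> \<Longrightarrow> f (x \<circ> \<pi> ^^ k) = f x"
proof (induction k arbitrary: x)
  case (Suc k)
  have "f (x \<circ> \<pi> ^^ Suc k) = f ((x \<circ> \<pi> ^^ k) \<circ> \<pi>)"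
    unfolding funpow_Suc_right by (simp only: comp_assoc)
  also have "\<dots> = f (x \<circ> \<pi> ^^ k)"
    by (rule Phi_invariant[OF Suc.prems])
  also have "\<dots> = f x"
    by (rule Suc.IH[OF Suc.prems])
  finally show ?case .
qed simp

lemma mem_cube_iff: "x \<in> cube n \<longleftrightarrow> (\<forall>i. x i \<longrightarrow> 1 \<le> i \<and> i \<le> n)"
  unfolding cube_def by auto

lemma comp_in_cube_iff:
  assumes "\<And>i. i \<notin> {1..n} \<Longrightarrow> \<pi> i = i"
  shows "x \<circ> \<pi> \<in> cube n \<longleftrightarrow> x \<in> cube n"
  using assms unfolding cube_def by auto

lemma fun_eq_upto:
  fixes f g :: "nat \<Rightarrow> 'a"
  assumes "\<And>i. i < n \<Longrightarrow> f i = g i" "\<And>i. n \<le> i \<Longrightarrow> f i = g i"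
  shows "f = g"
  using assms by (metis not_le ext)

lemma less_10_cases:
  "(i::nat) < 10 \<Longrightarrow> i = 0 \<or> i = 1 \<or> i = 2 \<or> i = 3 \<or> i = 4 \<or> i = 5 \<or> i = 6 \<or> i = 7 \<or> i = 8 \<or> i = 9"
  by auto

section \<open>Reduction of \<open>\<Phi>\<^sub>9\<close> to chains in \<open>\<Phi>\<^sub>6\<close>\<close>

definition sigma6 :: "nat \<Rightarrow> nat" where
  "sigma6 = cycle_of_list [1, 2] \<circ> cycle_of_list [3, 4, 5, 6]"

definition pi9 :: "nat \<Rightarrow> nat" where
  "pi9 = cycle_of_list [1, 2] \<circ> cycle_of_list [3, 4, 5] \<circ> cycle_of_list [6, 7, 8, 9]"

lemma sigma6_apply:
  "sigma6 i = (if i = 1 then 2 else if i = 2 then 1 else if i = 3 then 4 else if i = 4 then 5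
     else if i = 5 then 6 else if i = 6 then 3 else i)"
  by (simp add: sigma6_def transpose_def)

lemma pi9_apply:
  "pi9 i = (if i = 1 then 2 else if i = 2 then 1 else if i = 3 then 4 else if i = 4 then 5
     else if i = 5 then 3 else if i = 6 then 7 else if i = 7 then 8 else if i = 8 then 9
     else if i = 9 then 6 else i)"
  by (simp add: pi9_def transpose_def)

lemma funpow_pi9_beyond: "9 < i \<Longrightarrow> (pi9 ^^ k) i = i"
  by (induction k) (auto simp: pi9_apply)

lemma funpow_pi9_eqI:
  assumes "\<And>i. i < 10 \<Longrightarrow> (pi9 ^^ k) i = \<pi> i" "\<And>i. 9 < i \<Longrightarrow> \<pi> i = i"
  shows "pi9 ^^ k = \<pi>"
  using assms funpow_pi9_beyond by (intro fun_eq_upto[of 10]) auto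

lemma pi9_pow_4: "pi9 ^^ 4 = cycle_of_list [3, 4, 5]"
proof (rule funpow_pi9_eqI)
  fix i :: nat assume "i < 10"
  then show "(pi9 ^^ 4) i = cycle_of_list [3, 4, 5] i"
    by (elim less_10_cases[elim_format] disjE) (simp_all add: pi9_apply numeral_eq_Suc transpose_def)
qed (simp add: transpose_def)

lemma pi9_pow_9: "pi9 ^^ 9 = cycle_of_list [1, 2] \<circ> cycle_of_list [6, 7, 8, 9]"
proof (rule funpow_pi9_eqI)
  fix i :: nat assume "i < 10"
  then show "(pi9 ^^ 9) i = (cycle_of_list [1, 2] \<circ> cycle_of_list [6, 7, 8, 9]) i"
    by (elim less_10_cases[elim_format] disjE) (simp_all add: pi9_apply numeral_eq_Suc transpose_def)
qed (simp add: transpose_def)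

type_synonym boolfun = "(nat \<Rightarrow> bool) \<Rightarrow> bool"

type_synonym chain = "boolfun \<times> boolfun \<times> boolfun \<times> boolfun"

definition weight345 :: "(nat \<Rightarrow> bool) \<Rightarrow> nat" where
  "weight345 x = of_bool (x 3) + of_bool (x 4) + of_bool (x 5)"

text \<open>Coordinates 1, 2, 6, 7, 8, 9 of a point of \<open>B\<^sup>9\<close> are renumbered 1, ..., 6; this turns
  \<open>\<pi>\<^sup>9 = (1 2)(6 7 8 9)\<close> into \<open>\<sigma> = (1 2)(3 4 5 6)\<close>.\<close>

definition collapse :: "(nat \<Rightarrow> bool) \<Rightarrow> nat \<Rightarrow> bool" where
  "collapse x = (\<lambda>i. if i = 1 \<or> i = 2 then x i else if 3 \<le> i \<and> i \<le> 6 then x (i + 3) else False)"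

definition expand :: "nat \<Rightarrow> (nat \<Rightarrow> bool) \<Rightarrow> nat \<Rightarrow> bool" where
  "expand k z = (\<lambda>i. if i = 1 \<or> i = 2 then z i else if 6 \<le> i \<and> i \<le> 9 then z (i - 3)
      else 3 \<le> i \<and> i \<le> 5 \<and> i < 3 + k)"

lemma collapse_in_cube: "collapse x \<in> cube 6"
  by (auto simp: cube_def collapse_def)

lemma expand_in_cube: "expand k z \<in> cube 9"
  by (auto simp: cube_def expand_def)

lemma weight345_le: "weight345 x \<le> 3"
  by (simp add: weight345_def)

lemma weight345_expand: "k \<le> 3 \<Longrightarrow> weight345 (expand k z) = k"
  by (auto simp: weight345_def expand_def)

lemma collapse_expand: "z \<in> cube 6 \<Longrightarrow> collapse (expand k z) = z"
  by (rule ext) (auto simp: collapse_def expand_def cube_def)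

lemma collapse_mono: "x \<le> y \<Longrightarrow> collapse x \<le> collapse y"
  by (auto simp: collapse_def le_fun_def)

lemma weight345_mono: "x \<le> y \<Longrightarrow> weight345 x \<le> weight345 y"
  by (auto simp: weight345_def le_fun_def)

lemma expand_mono: "z \<le> z' \<Longrightarrow> k \<le> k' \<Longrightarrow> expand k z \<le> expand k' z'"
  by (auto simp: expand_def le_fun_def)

lemma weight345_comp_pi9: "weight345 (x \<circ> pi9) = weight345 x"
  by (simp add: weight345_def pi9_apply)

lemma collapse_comp_pi9: "collapse (x \<circ> pi9) = collapse x \<circ> sigma6"
  by (rule ext) (auto simp: collapse_def pi9_apply sigma6_apply)

lemma expand_comp_sigma6:
  "expand k (z \<circ> sigma6) = expand k z \<circ> cycle_of_list [1, 2] \<circ> cycle_of_list [6, 7, 8, 9]"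
proof (rule fun_eq_upto[of 10])
  fix i :: nat assume "i < 10"
  then show "expand k (z \<circ> sigma6) i = (expand k z \<circ> cycle_of_list [1, 2] \<circ> cycle_of_list [6, 7, 8, 9]) i"
    by (elim less_10_cases[elim_format] disjE) (simp_all add: expand_def sigma6_apply transpose_def)
qed (simp add: expand_def transpose_def)

lemma cube9_comp_pi9: "x \<circ> pi9 \<in> cube 9 \<longleftrightarrow> x \<in> cube 9"
  by (rule comp_in_cube_iff) (auto simp: pi9_apply)

lemma cube6_comp_sigma6: "x \<circ> sigma6 \<in> cube 6 \<longleftrightarrow> x \<in> cube 6"
  by (rule comp_in_cube_iff) (auto simp: sigma6_apply)

lemma weight345_comp_rotation: "weight345 (x \<circ> cycle_of_list [3, 4, 5]) = weight345 x"
  by (simp add: weight345_def transpose_def)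

lemma collapse_comp_rotation: "collapse (x \<circ> cycle_of_list [3, 4, 5]) = collapse x"
  by (rule ext) (auto simp: collapse_def transpose_def)

lemma cube9_comp_rotation: "x \<circ> cycle_of_list [3, 4, 5] \<in> cube 9 \<longleftrightarrow> x \<in> cube 9"
  by (rule comp_in_cube_iff) (auto simp: transpose_def)

lemma expand_collapse_sorted:
  assumes "x \<in> cube 9" "x 4 \<longrightarrow> x 3" "x 5 \<longrightarrow> x 4"
  shows "expand (weight345 x) (collapse x) = x"
proof (rule fun_eq_upto[of 10])
  fix i :: nat assume "i < 10"
  then show "expand (weight345 x) (collapse x) i = x i"
    using assms by (elim less_10_cases[elim_format] disjE) (auto simp: expand_def collapse_def weight345_def cube_def)
qed (use assms in \<open>auto simp: expand_def cube_def\<close>)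

text \<open>Some rotation of the coordinates 3, 4, 5 sorts them, and \<open>\<pi>\<^sup>4 = (3 4 5)\<close>.\<close>

lemma expand_collapse_invariant:
  assumes f: "f \<in> Phi 9 pi9" and x: "x \<in> cube 9"
  shows "f (expand (weight345 x) (collapse x)) = f x"
proof -
  let ?\<rho> = "cycle_of_list [3, 4, 5] :: nat \<Rightarrow> nat"
  have rot: "f (y \<circ> ?\<rho>) = f y" for y
    using Phi_funpow_invariant[OF f, of y 4] by (simp add: pi9_pow_4)
  have rot_sorts: "expand (weight345 x) (collapse x) = x \<circ> ?\<rho>"
    if "x \<circ> ?\<rho> \<in> cube 9" "(x \<circ> ?\<rho>) 4 \<longrightarrow> (x \<circ> ?\<rho>) 3" "(x \<circ> ?\<rho>) 5 \<longrightarrow> (x \<circ> ?\<rho>) 4" for x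
    using expand_collapse_sorted[OF that] unfolding weight345_comp_rotation collapse_comp_rotation .
  have x_rot: "x \<circ> ?\<rho> \<in> cube 9" "x \<circ> ?\<rho> \<circ> ?\<rho> \<in> cube 9"
    using x by (simp_all only: cube9_comp_rotation)
  consider "\<not> x 3" "x 4" | "\<not> x 4" "x 5" | "x 4 \<longrightarrow> x 3" "x 5 \<longrightarrow> x 4"
    by blast
  then show ?thesis
  proof cases
    case 1
    then have "expand (weight345 x) (collapse x) = x \<circ> ?\<rho>"
      using x_rot by (intro rot_sorts) (auto simp: transpose_def)
    then show ?thesis by (simp only: rot)
  next
    case 2
    have "expand (weight345 x) (collapse x) = expand (weight345 (x \<circ> ?\<rho>)) (collapse (x \<circ> ?\<rho>))"
      by (simp only: weight345_comp_rotation collapse_comp_rotation)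
    also have "\<dots> = x \<circ> ?\<rho> \<circ> ?\<rho>"
      using 2 x_rot by (intro rot_sorts) (auto simp: transpose_def)
    finally show ?thesis by (simp only: rot)
  next
    case 3
    then show ?thesis using x by (simp add: expand_collapse_sorted)
  qed
qed

definition chain_nth :: "nat \<Rightarrow> 'a \<times> 'a \<times> 'a \<times> 'a \<Rightarrow> 'a" where
  "chain_nth k c = (case c of (a0, a1, a2, a3) \<Rightarrow>
     if k = 0 then a0 else if k = 1 then a1 else if k = 2 then a2 else a3)"

lemma chain_nth_in: "c \<in> chains4 X \<Longrightarrow> chain_nth k c \<in> X"
  by (auto simp: chains4_def chain_nth_def)

lemma chain_nth_mono:
  fixes X :: "'a::preorder set"
  assumes "c \<in> chains4 X" "k \<le> k'"
  shows "chain_nth k c \<le> chain_nth k' c"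
proof (rule lift_Suc_mono_le[of "\<lambda>k. chain_nth k c", OF _ assms(2)])
  show "chain_nth k c \<le> chain_nth (Suc k) c" for k
    using assms(1) by (auto simp: chains4_def chain_nth_def)
qed

lemma chain_eqI:
  assumes "\<And>k. k \<le> 3 \<Longrightarrow> chain_nth k c = chain_nth k d"
  shows "c = d"
  using assms[of 0] assms[of 1] assms[of 2] assms[of 3]
  by (cases c; cases d) (simp add: chain_nth_def)

definition glue :: "chain \<Rightarrow> boolfun" where
  "glue c = (\<lambda>x. x \<in> cube 9 \<and> chain_nth (weight345 x) c (collapse x))"

definition slice :: "nat \<Rightarrow> boolfun \<Rightarrow> boolfun" where
  "slice k f = (\<lambda>z. z \<in> cube 6 \<and> f (expand k z))"

definition slices :: "boolfun \<Rightarrow> chain" where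
  "slices f = (slice 0 f, slice 1 f, slice 2 f, slice 3 f)"

lemma chain_nth_slices: "k \<le> 3 \<Longrightarrow> chain_nth k (slices f) = slice k f"
  by (auto simp: chain_nth_def slices_def le_Suc_eq numeral_eq_Suc)

lemma glue_in_Phi:
  assumes c: "c \<in> chains4 (Phi 6 sigma6)"
  shows "glue c \<in> Phi 9 pi9"
proof (rule Phi_memI)
  have D6: "chain_nth k c \<in> D 6" for k
    using chain_nth_in[OF c] by (simp add: Phi_def)
  show "glue c \<in> D 9"
  proof (rule D_memI)
    fix x y assume "x \<in> cube 9" "y \<in> cube 9" "x \<le> y" "glue c x"
    then have "chain_nth (weight345 x) c (collapse y)"
      using D_monoD[OF D6 collapse_in_cube collapse_in_cube collapse_mono] by (auto simp: glue_def)
    then have "chain_nth (weight345 y) c (collapse y)"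
      using chain_nth_mono[OF c weight345_mono[OF \<open>x \<le> y\<close>]] by (auto simp: le_fun_def)
    with \<open>y \<in> cube 9\<close> show "glue c y"
      by (simp add: glue_def)
  qed (simp add: glue_def)
  fix x
  have "chain_nth (weight345 x) c (collapse x \<circ> sigma6) = chain_nth (weight345 x) c (collapse x)"
    using chain_nth_in[OF c] by (rule Phi_invariant)
  then show "glue c (x \<circ> pi9) = glue c x"
    by (simp add: glue_def cube9_comp_pi9 weight345_comp_pi9 collapse_comp_pi9)
qed

lemma slice_in_Phi:
  assumes f: "f \<in> Phi 9 pi9"
  shows "slice k f \<in> Phi 6 sigma6"
proof (rule Phi_memI)
  have D9: "f \<in> D 9"
    using f by (simp add: Phi_def)
  show "slice k f \<in> D 6"
    using D_monoD[OF D9 expand_in_cube expand_in_cube expand_mono]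
    by (intro D_memI) (auto simp: slice_def)
  fix z
  have "f (expand k z \<circ> cycle_of_list [1, 2] \<circ> cycle_of_list [6, 7, 8, 9]) = f (expand k z)"
    using Phi_funpow_invariant[OF f, of "expand k z" 9] by (simp add: pi9_pow_9 comp_assoc)
  then show "slice k f (z \<circ> sigma6) = slice k f z"
    by (simp add: slice_def cube6_comp_sigma6 expand_comp_sigma6)
qed

lemma slices_in_chains4:
  assumes f: "f \<in> Phi 9 pi9"
  shows "slices f \<in> chains4 (Phi 6 sigma6)"
proof -
  have D9: "f \<in> D 9"
    using f by (simp add: Phi_def)
  have "slice k f \<le> slice k' f" if "k \<le> k'" for k k'
    using D_monoD[OF D9 expand_in_cube expand_in_cube expand_mono[OF order_refl that]]
    by (auto simp: slice_def le_fun_def)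
  then show ?thesis
    using slice_in_Phi[OF f] by (simp add: slices_def chains4_def)
qed

lemma slices_glue:
  assumes c: "c \<in> chains4 (Phi 6 sigma6)"
  shows "slices (glue c) = c"
proof (rule chain_eqI)
  fix k :: nat assume k: "k \<le> 3"
  have "slice k (glue c) z = chain_nth k c z" for z
  proof (cases "z \<in> cube 6")
    case False
    have "chain_nth k c \<in> D 6"
      using chain_nth_in[OF c] by (simp add: Phi_def)
    with False show ?thesis
      by (simp add: slice_def D_outside)
  qed (simp add: slice_def glue_def k expand_in_cube weight345_expand collapse_expand)
  then show "chain_nth k (slices (glue c)) = chain_nth k c"
    by (simp add: chain_nth_slices k fun_eq_iff)
qed

lemma glue_slices:
  assumes f: "f \<in> Phi 9 pi9"
  shows "glue (slices f) = f"
proof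
  fix x
  show "glue (slices f) x = f x"
  proof (cases "x \<in> cube 9")
    case True
    then show ?thesis
      using expand_collapse_invariant[OF f True]
      by (simp add: glue_def chain_nth_slices weight345_le slice_def collapse_in_cube)
  next
    case False
    then show ?thesis
      using D_outside f by (auto simp: glue_def Phi_def)
  qed
qed

theorem bij_betw_glue: "bij_betw glue (chains4 (Phi 6 sigma6)) (Phi 9 pi9)"
proof (rule bij_betw_byWitness[where f' = slices])
  show "\<forall>c\<in>chains4 (Phi 6 sigma6). slices (glue c) = c"
    by (simp add: slices_glue)
  show "\<forall>f\<in>Phi 9 pi9. glue (slices f) = f"
    by (simp add: glue_slices)
  show "glue ` chains4 (Phi 6 sigma6) \<subseteq> Phi 9 pi9"
    using glue_in_Phi by blast
  show "slices ` Phi 9 pi9 \<subseteq> chains4 (Phi 6 sigma6)"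
    using slices_in_chains4 by blast
qed

section \<open>Labellings of the orbit representatives of \<open>\<sigma>\<close>\<close>

type_synonym block = "nat \<times> nat \<times> nat \<times> nat"

fun swap :: "block \<Rightarrow> block" where
  "swap (a, b, c, d) = (a, c, b, d)"

definition mono_blocks :: "block set" where
  "mono_blocks = {(a, b, c, d). a \<le> b \<and> a \<le> c \<and> b \<le> d \<and> c \<le> d \<and> d \<le> 4}"

definition sym_blocks :: "block set" where
  "sym_blocks = {(a, b, c, d). a \<le> b \<and> b \<le> d \<and> d \<le> 4 \<and> c = b}"

text \<open>A labelling lists the values of a \<open>\<sigma>\<close>-invariant function at the 24 points
  \<open>(y\<^sub>1, y\<^sub>2, orbit_rep k)\<close>, one block \<open>(a, b, c, d)\<close> of values at \<open>y = 00, 10, 01, 11\<close> per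
  \<open>k = 0, ..., 5\<close>.  The representatives \<open>0000\<close> and \<open>1111\<close> are fixed by the rotation, so \<open>\<sigma>\<close>
  forces their blocks to be symmetric; the inequalities below are the covering relations between
  orbits, where \<open>swap\<close> appears because \<open>1000 \<le> 1001\<close> and \<open>1001\<close> reaches the representative
  \<open>1100\<close> through an odd power of \<open>\<sigma>\<close>.\<close>

type_synonym labelling = "block \<times> block \<times> block \<times> block \<times> block \<times> block"

definition block_labellings :: "labelling set" where
  "block_labellings = {(s0, g1, g2, g3, g4, s5).
     s0 \<in> sym_blocks \<and> g1 \<in> mono_blocks \<and> g2 \<in> mono_blocks \<and> g3 \<in> mono_blocks \<and>
     g4 \<in> mono_blocks \<and> s5 \<in> sym_blocks \<and> s0 \<le> g1 \<and> g1 \<le> g2 \<and> g1 \<le> swap g2 \<and> g1 \<le> g3 \<and>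
     g2 \<le> g4 \<and> swap g2 \<le> g4 \<and> g3 \<le> g4 \<and> g4 \<le> s5}"

lemma labelling_exhaust:
  obtains a0 b0 c0 d0 a1 b1 c1 d1 a2 b2 c2 d2 a3 b3 c3 d3 a4 b4 c4 d4 a5 b5 c5 d5
  where "v = ((a0, b0, c0, d0), (a1, b1, c1, d1), (a2, b2, c2, d2), (a3, b3, c3, d3), (a4, b4, c4, d4),
             (a5, b5, c5, d5))"
  by (metis prod.exhaust)

text \<open>\<open>orbit_index r\<^sub>3 r\<^sub>4 r\<^sub>5 r\<^sub>6\<close> is the number of the rotation class of the word \<open>r\<close> and
  tells whether an odd power of the rotation maps \<open>r\<close> to the representative \<open>orbit_rep\<close> of that
  class; odd powers of \<open>\<sigma>\<close> also exchange \<open>y\<^sub>1\<close> and \<open>y\<^sub>2\<close>.\<close>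

definition orbit_rep :: "nat \<Rightarrow> bool list" where
  "orbit_rep k = [[False, False, False, False], [True, False, False, False], [True, True, False, False],
                  [True, False, True, False], [True, True, True, False], [True, True, True, True]] ! k"

fun orbit_index :: "bool \<Rightarrow> bool \<Rightarrow> bool \<Rightarrow> bool \<Rightarrow> nat \<times> bool" where
  "orbit_index False False False False = (0, False)"
| "orbit_index False False False True = (1, True)"
| "orbit_index False False True False = (1, False)"
| "orbit_index False False True True = (2, False)"
| "orbit_index False True False False = (1, True)"
| "orbit_index False True False True = (3, True)"
| "orbit_index False True True False = (2, True)"
| "orbit_index False True True True = (4, True)"
| "orbit_index True False False False = (1, False)"
| "orbit_index True False False True = (2, True)"
| "orbit_index True False True False = (3, False)"
| "orbit_index True False True True = (4, False)"
| "orbit_index True True False False = (2, False)"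
| "orbit_index True True False True = (4, True)"
| "orbit_index True True True False = (4, False)"
| "orbit_index True True True True = (5, False)"

definition sigma_list :: "bool list \<Rightarrow> bool list" where
  "sigma_list bs = [bs ! 1, bs ! 0, bs ! 3, bs ! 4, bs ! 5, bs ! 2]"

definition canonical :: "bool list \<Rightarrow> bool list" where
  "canonical bs = (case orbit_index (bs ! 2) (bs ! 3) (bs ! 4) (bs ! 5) of (k, flip) \<Rightarrow>
     (if flip then [bs ! 1, bs ! 0] else [bs ! 0, bs ! 1]) @ orbit_rep k)"

lemma canonical_in_orbit:
  "bs \<in> set (List.n_lists 6 [True, False]) \<Longrightarrow>
     canonical bs \<in> {bs, sigma_list bs, sigma_list (sigma_list bs), sigma_list (sigma_list (sigma_list bs))}"
  by (auto simp: canonical_def sigma_list_def orbit_rep_def numeral_eq_Suc)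

fun block_value :: "block \<Rightarrow> bool \<Rightarrow> bool \<Rightarrow> nat" where
  "block_value (a, b, c, d) y1 y2 = (if y1 then if y2 then d else b else if y2 then c else a)"

fun block :: "labelling \<Rightarrow> nat \<Rightarrow> block" where
  "block (s0, g1, g2, g3, g4, s5) k =
     (if k = 0 then s0 else if k = 1 then g1 else if k = 2 then g2 else if k = 3 then g3
      else if k = 4 then g4 else s5)"

definition label_value :: "labelling \<Rightarrow> bool list \<Rightarrow> nat" where
  "label_value v bs = (case orbit_index (bs ! 2) (bs ! 3) (bs ! 4) (bs ! 5) of (k, flip) \<Rightarrow>
     if flip then block_value (block v k) (bs ! 1) (bs ! 0) else block_value (block v k) (bs ! 0) (bs ! 1))"

definition covering_monotone :: "labelling \<Rightarrow> bool" where
  "covering_monotone v \<longleftrightarrow> (\<forall>bs\<in>set (List.n_lists 6 [True, False]). \<forall>i\<in>set [0, 1, 2, 3, 4, 5].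
     \<not> bs ! i \<longrightarrow> label_value v bs \<le> label_value v (bs[i := True]))"

lemma covering_monotone_iff:
  "covering_monotone v \<longleftrightarrow>
     (\<forall>bs. length bs = 6 \<longrightarrow> (\<forall>i<6. \<not> bs ! i \<longrightarrow> label_value v bs \<le> label_value v (bs[i := True])))"
proof -
  have "set (List.n_lists 6 [True, False]) = {bs. length bs = 6}" "set [0::nat, 1, 2, 3, 4, 5] = {..<6}"
    by (auto simp: set_n_lists)
  then show ?thesis
    unfolding covering_monotone_def by auto
qed

fun block_mono :: "block \<Rightarrow> bool" where
  "block_mono (a, b, c, d) \<longleftrightarrow> a \<le> b \<and> a \<le> c \<and> b \<le> d \<and> c \<le> d"

fun labelling_ordered :: "labelling \<Rightarrow> bool" where
  "labelling_ordered (s0, g1, g2, g3, g4, s5) \<longleftrightarrow>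
     block_mono s0 \<and> block_mono g1 \<and> block_mono g2 \<and> block_mono g3 \<and> block_mono g4 \<and> block_mono s5 \<and>
     s0 \<le> g1 \<and> g1 \<le> g2 \<and> g1 \<le> swap g2 \<and> g1 \<le> g3 \<and> g2 \<le> g4 \<and> swap g2 \<le> g4 \<and> g3 \<le> g4 \<and> g4 \<le> s5"

lemma covering_monotone_iff_ordered:
  assumes "c0 = b0" "c5 = b5"
  shows "covering_monotone ((a0, b0, c0, d0), (a1, b1, c1, d1), (a2, b2, c2, d2), (a3, b3, c3, d3),
      (a4, b4, c4, d4), (a5, b5, c5, d5)) \<longleftrightarrow>
    labelling_ordered ((a0, b0, c0, d0), (a1, b1, c1, d1), (a2, b2, c2, d2), (a3, b3, c3, d3),
      (a4, b4, c4, d4), (a5, b5, c5, d5))" (is "?covering \<longleftrightarrow> ?ordered")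
proof
  assume ?ordered
  then show ?covering
    using assms unfolding covering_monotone_def by (simp add: label_value_def numeral_eq_Suc)
next
  assume ?covering
  then show ?ordered
    using assms unfolding covering_monotone_def by (simp add: label_value_def numeral_eq_Suc)
qed

lemma mem_block_labellings_iff_ordered:
  "((a0, b0, c0, d0), (a1, b1, c1, d1), (a2, b2, c2, d2), (a3, b3, c3, d3), (a4, b4, c4, d4),
    (a5, b5, c5, d5)) \<in> block_labellings \<longleftrightarrow>
   labelling_ordered ((a0, b0, c0, d0), (a1, b1, c1, d1), (a2, b2, c2, d2), (a3, b3, c3, d3), (a4, b4, c4, d4),
    (a5, b5, c5, d5)) \<and> c0 = b0 \<and> c5 = b5 \<and> d5 \<le> 4"
  by (auto simp: block_labellings_def mono_blocks_def sym_blocks_def)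

lemma label_value_sigma_list:
  assumes "c0 = b0" "c5 = b5"
  shows "\<forall>bs\<in>set (List.n_lists 6 [True, False]).
    label_value ((a0, b0, c0, d0), g1, g2, g3, g4, (a5, b5, c5, d5)) (sigma_list bs) =
    label_value ((a0, b0, c0, d0), g1, g2, g3, g4, (a5, b5, c5, d5)) bs"
  using assms by (simp add: label_value_def sigma_list_def numeral_eq_Suc)

lemma label_value_le_4:
  assumes "v \<in> block_labellings"
  shows "label_value v bs \<le> 4"
proof -
  have "block v k \<in> mono_blocks" for k
    using assms by (cases v) (auto simp: block_labellings_def sym_blocks_def mono_blocks_def)
  moreover have "block_value g y1 y2 \<le> 4" if "g \<in> mono_blocks" for g y1 y2
    using that by (cases g) (auto simp: mono_blocks_def)
  ultimately have "block_value (block v k) y1 y2 \<le> 4" for k y1 y2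
    by blast
  then show ?thesis
    by (simp add: label_value_def split: prod.split)
qed

section \<open>Chains in \<open>\<Phi>\<^sub>6\<close> as labellings\<close>

definition vec6 :: "bool list \<Rightarrow> nat \<Rightarrow> bool" where
  "vec6 bs = (\<lambda>i. 1 \<le> i \<and> i \<le> 6 \<and> bs ! (i - 1))"

definition list6 :: "(nat \<Rightarrow> bool) \<Rightarrow> bool list" where
  "list6 x = map x [1..<7]"

lemma vec6_in_cube: "vec6 bs \<in> cube 6"
  by (simp add: mem_cube_iff vec6_def)

lemma length_list6 [simp]: "length (list6 x) = 6"
  by (simp add: list6_def)

lemma nth_list6: "i < 6 \<Longrightarrow> list6 x ! i = x (Suc i)"
  by (simp add: list6_def)

lemma vec6_list6:
  assumes "x \<in> cube 6"
  shows "vec6 (list6 x) = x"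
proof
  fix i
  show "vec6 (list6 x) i = x i"
  proof (cases "1 \<le> i \<and> i \<le> 6")
    case True
    then have "list6 x ! (i - 1) = x (Suc (i - 1))"
      by (intro nth_list6) auto
    with True show ?thesis
      by (simp add: vec6_def)
  qed (use assms in \<open>auto simp: vec6_def mem_cube_iff\<close>)
qed

lemma list6_vec6: "length bs = 6 \<Longrightarrow> list6 (vec6 bs) = bs"
  by (rule nth_equalityI) (auto simp: nth_list6 vec6_def)

lemma length_eq_6_iff: "length bs = 6 \<longleftrightarrow> bs \<in> set (List.n_lists 6 [True, False])"
  by (auto simp: set_n_lists)

lemma length6_cases:
  assumes "length bs = 6"
  obtains b0 b1 b2 b3 b4 b5 where "bs = [b0, b1, b2, b3, b4, b5]"
  using assms by (auto simp: length_Suc_conv numeral_eq_Suc)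

lemma vec6_sigma_list:
  assumes "length bs = 6"
  shows "vec6 (sigma_list bs) = vec6 bs \<circ> sigma6"
proof -
  obtain b0 b1 b2 b3 b4 b5 where bs: "bs = [b0, b1, b2, b3, b4, b5]"
    using assms by (rule length6_cases)
  show ?thesis
  proof (rule fun_eq_upto[of 10])
    fix i :: nat assume "i < 10"
    then show "vec6 (sigma_list bs) i = (vec6 bs \<circ> sigma6) i"
      by (elim less_10_cases[elim_format] disjE) (simp_all add: bs vec6_def sigma_list_def sigma6_apply)
  qed (simp add: vec6_def sigma6_apply)
qed

lemma list6_comp_sigma6: "list6 (x \<circ> sigma6) = sigma_list (list6 x)"
  by (simp add: list6_def sigma_list_def sigma6_apply upt_rec numeral_eq_Suc)

lemma vec6_le_update: "vec6 bs \<le> vec6 (bs[i := True])"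
  by (cases "i < length bs") (auto simp: vec6_def le_fun_def nth_list_update list_update_beyond)

lemma mono_if_mono_on_flips:
  fixes F :: "bool list \<Rightarrow> 'a::preorder"
  assumes flip: "\<And>bs i. length bs = n \<Longrightarrow> i < n \<Longrightarrow> \<not> bs ! i \<Longrightarrow> F bs \<le> F (bs[i := True])"
  shows "length xs = n \<Longrightarrow> length ys = n \<Longrightarrow> (\<forall>i<n. xs ! i \<longrightarrow> ys ! i) \<Longrightarrow> F xs \<le> F ys"
proof (induction "card {i. i < n \<and> xs ! i \<noteq> ys ! i}" arbitrary: xs)
  case 0
  then have "xs = ys"
    by (intro nth_equalityI) auto
  then show ?case by simp
next
  case (Suc m)
  then obtain i where i: "i < n" "xs ! i \<noteq> ys ! i"
    by (metis (mono_tags, lifting) card.empty empty_Collect_eq nat.distinct(1))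
  then have xi: "\<not> xs ! i" "ys ! i"
    using Suc.prems by auto
  let ?xs = "xs[i := True]"
  have "{j. j < n \<and> ?xs ! j \<noteq> ys ! j} = {j. j < n \<and> xs ! j \<noteq> ys ! j} - {i}"
    using i xi Suc.prems by (auto simp: nth_list_update)
  then have "card {j. j < n \<and> ?xs ! j \<noteq> ys ! j} = m"
    using Suc.hyps(2) i by simp
  moreover have "\<forall>j<n. ?xs ! j \<longrightarrow> ys ! j"
    using Suc.prems xi i by (auto simp: nth_list_update)
  ultimately have "F ?xs \<le> F ys"
    using Suc.hyps(1)[of ?xs] Suc.prems by simp
  moreover have "F xs \<le> F ?xs"
    using flip[of xs i] Suc.prems i xi by simp
  ultimately show ?case
    using order_trans by blast
qed

definition height :: "chain \<Rightarrow> (nat \<Rightarrow> bool) \<Rightarrow> nat" where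
  "height c x = (case c of (a0, a1, a2, a3) \<Rightarrow>
     of_bool (a0 x) + of_bool (a1 x) + of_bool (a2 x) + of_bool (a3 x))"

lemma height_le_4: "height c x \<le> 4"
  by (cases c) (simp add: height_def)

lemma chains4_memD:
  "(a0, a1, a2, a3) \<in> chains4 X \<Longrightarrow> a0 \<in> X \<and> a1 \<in> X \<and> a2 \<in> X \<and> a3 \<in> X \<and> a0 \<le> a1 \<and> a1 \<le> a2 \<and> a2 \<le> a3"
  by (simp add: chains4_def)

lemma height_sigma_list:
  assumes c: "c \<in> chains4 (Phi 6 sigma6)" and bs: "length bs = 6"
  shows "height c (vec6 (sigma_list bs)) = height c (vec6 bs)"
proof -
  obtain a0 a1 a2 a3 where ca: "c = (a0, a1, a2, a3)"
    by (cases c) auto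
  with c have "a0 \<in> Phi 6 sigma6" "a1 \<in> Phi 6 sigma6" "a2 \<in> Phi 6 sigma6" "a3 \<in> Phi 6 sigma6"
    by (simp_all add: chains4_def)
  then show ?thesis
    by (simp add: height_def ca vec6_sigma_list[OF bs] Phi_invariant)
qed

lemma height_canonical:
  assumes c: "c \<in> chains4 (Phi 6 sigma6)" and bs: "length bs = 6"
  shows "height c (vec6 (canonical bs)) = height c (vec6 bs)"
proof -
  have "length (sigma_list cs) = 6" for cs
    by (simp add: sigma_list_def)
  then show ?thesis
    using canonical_in_orbit[of bs] bs height_sigma_list[OF c] by (auto simp: length_eq_6_iff)
qed

lemma height_flip:
  assumes c: "c \<in> chains4 (Phi 6 sigma6)"
  shows "height c (vec6 bs) \<le> height c (vec6 (bs[i := True]))"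
proof -
  obtain a0 a1 a2 a3 where ca: "c = (a0, a1, a2, a3)"
    by (cases c) auto
  have "a (vec6 bs) \<Longrightarrow> a (vec6 (bs[i := True]))" if "a \<in> Phi 6 sigma6" for a
    using that D_monoD[OF _ vec6_in_cube vec6_in_cube vec6_le_update] by (auto simp: Phi_def)
  with c show ?thesis
    by (auto simp: height_def ca chains4_def intro!: add_mono)
qed

definition height_block :: "chain \<Rightarrow> nat \<Rightarrow> block" where
  "height_block c k = (height c (vec6 ([False, False] @ orbit_rep k)), height c (vec6 ([True, False] @ orbit_rep k)),
     height c (vec6 ([False, True] @ orbit_rep k)), height c (vec6 ([True, True] @ orbit_rep k)))"

definition labelling_of :: "chain \<Rightarrow> labelling" where
  "labelling_of c = (height_block c 0, height_block c 1, height_block c 2, height_block c 3,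
     height_block c 4, height_block c 5)"

lemma label_value_labelling_of_canonical:
  assumes "length bs = 6"
  shows "label_value (labelling_of c) bs = height c (vec6 (canonical bs))"
proof -
  obtain b0 b1 b2 b3 b4 b5 where bs: "bs = [b0, b1, b2, b3, b4, b5]"
    using assms by (rule length6_cases)
  show ?thesis unfolding bs
    by (cases b0; cases b1; cases b2; cases b3; cases b4; cases b5)
       (simp_all add: label_value_def canonical_def labelling_of_def height_block_def)
qed

lemma label_value_labelling_of:
  "c \<in> chains4 (Phi 6 sigma6) \<Longrightarrow> length bs = 6 \<Longrightarrow> label_value (labelling_of c) bs = height c (vec6 bs)"
  by (simp add: label_value_labelling_of_canonical height_canonical)

lemma labelling_of_in_block_labellings:
  assumes c: "c \<in> chains4 (Phi 6 sigma6)"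
  shows "labelling_of c \<in> block_labellings"
proof -
  obtain a0 b0 c0 d0 a1 b1 c1 d1 a2 b2 c2 d2 a3 b3 c3 d3 a4 b4 c4 d4 a5 b5 c5 d5
    where v: "labelling_of c = ((a0, b0, c0, d0), (a1, b1, c1, d1), (a2, b2, c2, d2), (a3, b3, c3, d3),
      (a4, b4, c4, d4), (a5, b5, c5, d5))"
    by (rule labelling_exhaust)
  have "covering_monotone (labelling_of c)"
    using height_flip[OF c] label_value_labelling_of[OF c] by (simp add: covering_monotone_iff)
  moreover have "c0 = b0" "c5 = b5"
    using v height_sigma_list[OF c, of "[True, False] @ orbit_rep 0"] height_sigma_list[OF c, of "[True, False] @ orbit_rep 5"]
    by (auto simp: labelling_of_def height_block_def sigma_list_def orbit_rep_def)
  moreover have "d5 \<le> 4"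
    using v height_le_4[of c "vec6 ([True, True] @ orbit_rep 5)"]
    by (simp add: labelling_of_def height_block_def)
  ultimately show ?thesis
    unfolding v by (simp add: mem_block_labellings_iff_ordered covering_monotone_iff_ordered)
qed

definition level :: "labelling \<Rightarrow> nat \<Rightarrow> boolfun" where
  "level v t = (\<lambda>x. x \<in> cube 6 \<and> t \<le> label_value v (list6 x))"

definition chain_of_labelling :: "labelling \<Rightarrow> chain" where
  "chain_of_labelling v = (level v 4, level v 3, level v 2, level v 1)"

lemma block_labellings_memD:
  assumes "v \<in> block_labellings"
  shows "covering_monotone v" "length bs = 6 \<Longrightarrow> label_value v (sigma_list bs) = label_value v bs"
proof -
  obtain a0 b0 c0 d0 a1 b1 c1 d1 a2 b2 c2 d2 a3 b3 c3 d3 a4 b4 c4 d4 a5 b5 c5 d5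
    where v: "v = ((a0, b0, c0, d0), (a1, b1, c1, d1), (a2, b2, c2, d2), (a3, b3, c3, d3),
      (a4, b4, c4, d4), (a5, b5, c5, d5))"
    by (rule labelling_exhaust)
  with assms have "labelling_ordered v" "c0 = b0" "c5 = b5"
    by (simp_all add: mem_block_labellings_iff_ordered)
  then show "covering_monotone v"
    unfolding v by (simp add: covering_monotone_iff_ordered)
  show "label_value v (sigma_list bs) = label_value v bs" if "length bs = 6"
    using label_value_sigma_list[OF \<open>c0 = b0\<close> \<open>c5 = b5\<close>] that
    unfolding v by (simp add: length_eq_6_iff)
qed

lemma label_value_mono:
  assumes v: "v \<in> block_labellings" and "x \<le> y"
  shows "label_value v (list6 x) \<le> label_value v (list6 y)"
proof (rule mono_if_mono_on_flips[where n = 6])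
  show "label_value v bs \<le> label_value v (bs[i := True])" if "length bs = 6" "i < 6" "\<not> bs ! i" for bs i
    using block_labellings_memD(1)[OF v] that by (simp add: covering_monotone_iff)
  show "\<forall>i<6. list6 x ! i \<longrightarrow> list6 y ! i"
    using \<open>x \<le> y\<close> by (auto simp: nth_list6 le_fun_def)
qed simp_all

lemma level_in_Phi:
  assumes v: "v \<in> block_labellings"
  shows "level v t \<in> Phi 6 sigma6"
proof (rule Phi_memI)
  show "level v t \<in> D 6"
    using label_value_mono[OF v] by (intro D_memI) (auto simp: level_def intro: order_trans)
  show "level v t (x \<circ> sigma6) = level v t x" for x
    by (simp add: level_def cube6_comp_sigma6 list6_comp_sigma6 block_labellings_memD(2)[OF v])
qed

lemma chain_of_labelling_in_chains4:
  assumes "v \<in> block_labellings"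
  shows "chain_of_labelling v \<in> chains4 (Phi 6 sigma6)"
proof -
  have "level v 4 \<le> level v 3" "level v 3 \<le> level v 2" "level v 2 \<le> level v 1"
    by (auto simp: level_def le_fun_def)
  then show ?thesis
    using level_in_Phi[OF assms] by (simp add: chain_of_labelling_def chains4_def)
qed

lemma height_chain_of_labelling:
  assumes "v \<in> block_labellings" "length bs = 6"
  shows "height (chain_of_labelling v) (vec6 bs) = label_value v bs"
  using label_value_le_4[OF assms(1), of bs]
  by (auto simp: height_def chain_of_labelling_def level_def vec6_in_cube list6_vec6[OF assms(2)])

lemma labelling_of_chain_of_labelling:
  assumes v: "v \<in> block_labellings"
  shows "labelling_of (chain_of_labelling v) = v"
proof -
  obtain a0 b0 c0 d0 a1 b1 c1 d1 a2 b2 c2 d2 a3 b3 c3 d3 a4 b4 c4 d4 a5 b5 c5 d5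
    where ve: "v = ((a0, b0, c0, d0), (a1, b1, c1, d1), (a2, b2, c2, d2), (a3, b3, c3, d3),
      (a4, b4, c4, d4), (a5, b5, c5, d5))"
    by (rule labelling_exhaust)
  have "length ([y1, y2] @ orbit_rep k) = 6" if "k \<le> 5" for y1 y2 k
    using that by (auto simp: orbit_rep_def le_Suc_eq numeral_eq_Suc)
  then have "height (chain_of_labelling v) (vec6 ([y1, y2] @ orbit_rep k)) = label_value v ([y1, y2] @ orbit_rep k)"
    if "k \<le> 5" for y1 y2 k
    using height_chain_of_labelling[OF v] that by blast
  then show ?thesis
    unfolding labelling_of_def height_block_def
    by (simp del: append_Cons append_Nil) (simp add: ve label_value_def orbit_rep_def)
qed

lemma chain_member_iff_height:
  assumes c: "(a0, a1, a2, a3) \<in> chains4 (Phi 6 sigma6)"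
  shows "a0 x \<longleftrightarrow> x \<in> cube 6 \<and> 4 \<le> height (a0, a1, a2, a3) x"
    and "a1 x \<longleftrightarrow> x \<in> cube 6 \<and> 3 \<le> height (a0, a1, a2, a3) x"
    and "a2 x \<longleftrightarrow> x \<in> cube 6 \<and> 2 \<le> height (a0, a1, a2, a3) x"
    and "a3 x \<longleftrightarrow> x \<in> cube 6 \<and> 1 \<le> height (a0, a1, a2, a3) x"
proof -
  note members = chains4_memD[OF c]
  have "a0 \<in> D 6" "a1 \<in> D 6" "a2 \<in> D 6" "a3 \<in> D 6"
    using members by (simp_all add: Phi_def)
  then have "x \<notin> cube 6 \<Longrightarrow> \<not> a0 x \<and> \<not> a1 x \<and> \<not> a2 x \<and> \<not> a3 x"
    using D_outside by blast
  moreover have "a0 x \<Longrightarrow> a1 x" "a1 x \<Longrightarrow> a2 x" "a2 x \<Longrightarrow> a3 x"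
    using members by (auto simp: le_fun_def)
  ultimately show "a0 x \<longleftrightarrow> x \<in> cube 6 \<and> 4 \<le> height (a0, a1, a2, a3) x"
    and "a1 x \<longleftrightarrow> x \<in> cube 6 \<and> 3 \<le> height (a0, a1, a2, a3) x"
    and "a2 x \<longleftrightarrow> x \<in> cube 6 \<and> 2 \<le> height (a0, a1, a2, a3) x"
    and "a3 x \<longleftrightarrow> x \<in> cube 6 \<and> 1 \<le> height (a0, a1, a2, a3) x"
    by (auto simp: height_def)
qed

lemma chain_of_labelling_labelling_of:
  assumes c: "c \<in> chains4 (Phi 6 sigma6)"
  shows "chain_of_labelling (labelling_of c) = c"
proof -
  obtain a0 a1 a2 a3 where ca: "c = (a0, a1, a2, a3)"
    by (cases c) auto
  have "level (labelling_of c) t x \<longleftrightarrow> x \<in> cube 6 \<and> t \<le> height c x" for t x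
    by (auto simp: level_def label_value_labelling_of[OF c] vec6_list6)
  then show ?thesis
    using chain_member_iff_height c unfolding ca by (auto simp: chain_of_labelling_def fun_eq_iff)
qed

theorem bij_betw_labelling_of: "bij_betw labelling_of (chains4 (Phi 6 sigma6)) block_labellings"
proof (rule bij_betw_byWitness[where f' = chain_of_labelling])
  show "\<forall>c\<in>chains4 (Phi 6 sigma6). chain_of_labelling (labelling_of c) = c"
    by (simp add: chain_of_labelling_labelling_of)
  show "\<forall>v\<in>block_labellings. labelling_of (chain_of_labelling v) = v"
    by (simp add: labelling_of_chain_of_labelling)
  show "labelling_of ` chains4 (Phi 6 sigma6) \<subseteq> block_labellings"
    using labelling_of_in_block_labellings by blast
  show "chain_of_labelling ` block_labellings \<subseteq> chains4 (Phi 6 sigma6)"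
    using chain_of_labelling_in_chains4 by blast
qed

section \<open>Counting labellings\<close>

definition mono_block_list :: "block list" where
  "mono_block_list =
   [(0,0,0,0), (0,0,0,1), (0,0,1,1), (0,1,0,1), (0,1,1,1), (1,1,1,1), (0,0,0,2), (0,0,1,2), (0,0,2,2), (0,1,0,2),
    (0,1,1,2), (1,1,1,2), (0,1,2,2), (1,1,2,2), (0,2,0,2), (0,2,1,2), (1,2,1,2), (0,2,2,2), (1,2,2,2), (2,2,2,2),
    (0,0,0,3), (0,0,1,3), (0,0,2,3), (0,0,3,3), (0,1,0,3), (0,1,1,3), (1,1,1,3), (0,1,2,3), (1,1,2,3), (0,1,3,3),
    (1,1,3,3), (0,2,0,3), (0,2,1,3), (1,2,1,3), (0,2,2,3), (1,2,2,3), (2,2,2,3), (0,2,3,3), (1,2,3,3), (2,2,3,3),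
    (0,3,0,3), (0,3,1,3), (1,3,1,3), (0,3,2,3), (1,3,2,3), (2,3,2,3), (0,3,3,3), (1,3,3,3), (2,3,3,3), (3,3,3,3),
    (0,0,0,4), (0,0,1,4), (0,0,2,4), (0,0,3,4), (0,0,4,4), (0,1,0,4), (0,1,1,4), (1,1,1,4), (0,1,2,4), (1,1,2,4),
    (0,1,3,4), (1,1,3,4), (0,1,4,4), (1,1,4,4), (0,2,0,4), (0,2,1,4), (1,2,1,4), (0,2,2,4), (1,2,2,4), (2,2,2,4),
    (0,2,3,4), (1,2,3,4), (2,2,3,4), (0,2,4,4), (1,2,4,4), (2,2,4,4), (0,3,0,4), (0,3,1,4), (1,3,1,4), (0,3,2,4),
    (1,3,2,4), (2,3,2,4), (0,3,3,4), (1,3,3,4), (2,3,3,4), (3,3,3,4), (0,3,4,4), (1,3,4,4), (2,3,4,4), (3,3,4,4),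
    (0,4,0,4), (0,4,1,4), (1,4,1,4), (0,4,2,4), (1,4,2,4), (2,4,2,4), (0,4,3,4), (1,4,3,4), (2,4,3,4), (3,4,3,4),
    (0,4,4,4), (1,4,4,4), (2,4,4,4), (3,4,4,4), (4,4,4,4)]"

definition sym_block_list :: "block list" where
  "sym_block_list =
   [(0,0,0,0), (0,0,0,1), (0,1,1,1), (1,1,1,1), (0,0,0,2), (0,1,1,2), (1,1,1,2), (0,2,2,2), (1,2,2,2), (2,2,2,2),
    (0,0,0,3), (0,1,1,3), (1,1,1,3), (0,2,2,3), (1,2,2,3), (2,2,2,3), (0,3,3,3), (1,3,3,3), (2,3,3,3), (3,3,3,3),
    (0,0,0,4), (0,1,1,4), (1,1,1,4), (0,2,2,4), (1,2,2,4), (2,2,2,4), (0,3,3,4), (1,3,3,4), (2,3,3,4), (3,3,3,4),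
    (0,4,4,4), (1,4,4,4), (2,4,4,4), (3,4,4,4), (4,4,4,4)]"

lemma mono_block_list_enum:
  "mono_block_list = [(a, b, c, d). d \<leftarrow> [0..<5], b \<leftarrow> [0..<Suc d], c \<leftarrow> [0..<Suc d], a \<leftarrow> [0..<Suc (min b c)]]"
  by (simp add: mono_block_list_def upt_rec)

lemma set_mono_block_list: "set mono_block_list = mono_blocks"
  unfolding mono_block_list_enum mono_blocks_def by (force simp: less_Suc_eq_le simp del: upt_Suc)

lemma distinct_mono_block_list: "distinct mono_block_list"
  by (simp add: mono_block_list_def)

lemma set_sym_block_list: "set sym_block_list = sym_blocks"
proof -
  have "sym_block_list = filter (\<lambda>(a, b, c, d). c = b) mono_block_list"
    by (simp add: sym_block_list_def mono_block_list_def)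
  then have "set sym_block_list = {g \<in> set mono_block_list. (\<lambda>(a, b, c, d). c = b) g}"
    by (metis set_filter)
  also have "\<dots> = sym_blocks"
    by (auto simp: set_mono_block_list mono_blocks_def sym_blocks_def)
  finally show ?thesis .
qed

lemma distinct_sym_block_list: "distinct sym_block_list"
  by (simp add: sym_block_list_def)

lemma sum_filter_distinct_list:
  "distinct xs \<Longrightarrow> (\<Sum>x\<in>{x \<in> set xs. P x}. f x) = (\<Sum>x\<leftarrow>xs. if P x then f x else 0)"
  by (simp add: sum.inter_filter[symmetric] sum_list_distinct_conv_sum_set)

definition sym_blocks_below :: "block \<Rightarrow> nat" where
  "sym_blocks_below g = card {s \<in> sym_blocks. s \<le> g}"

lemma sym_blocks_below_list: "sym_blocks_below g = length (filter (\<lambda>s. s \<le> g) sym_block_list)"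
  unfolding sym_blocks_below_def set_sym_block_list[symmetric]
  by (metis distinct_card distinct_filter set_filter distinct_sym_block_list)

lemma sym_blocks_below_values [simp]:
  "sym_blocks_below (0,0,0,0) = 1" "sym_blocks_below (0,0,0,1) = 2" "sym_blocks_below (0,0,1,1) = 2"
  "sym_blocks_below (0,1,0,1) = 2" "sym_blocks_below (0,1,1,1) = 3" "sym_blocks_below (1,1,1,1) = 4"
  "sym_blocks_below (0,0,0,2) = 3" "sym_blocks_below (0,0,1,2) = 3" "sym_blocks_below (0,0,2,2) = 3"
  "sym_blocks_below (0,1,0,2) = 3" "sym_blocks_below (0,1,1,2) = 5" "sym_blocks_below (1,1,1,2) = 7"
  "sym_blocks_below (0,1,2,2) = 5" "sym_blocks_below (1,1,2,2) = 7" "sym_blocks_below (0,2,0,2) = 3"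
  "sym_blocks_below (0,2,1,2) = 5" "sym_blocks_below (1,2,1,2) = 7" "sym_blocks_below (0,2,2,2) = 6"
  "sym_blocks_below (1,2,2,2) = 9" "sym_blocks_below (2,2,2,2) = 10" "sym_blocks_below (0,0,0,3) = 4"
  "sym_blocks_below (0,0,1,3) = 4" "sym_blocks_below (0,0,2,3) = 4" "sym_blocks_below (0,0,3,3) = 4"
  "sym_blocks_below (0,1,0,3) = 4" "sym_blocks_below (0,1,1,3) = 7" "sym_blocks_below (1,1,1,3) = 10"
  "sym_blocks_below (0,1,2,3) = 7" "sym_blocks_below (1,1,2,3) = 10" "sym_blocks_below (0,1,3,3) = 7"
  "sym_blocks_below (1,1,3,3) = 10" "sym_blocks_below (0,2,0,3) = 4" "sym_blocks_below (0,2,1,3) = 7"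
  "sym_blocks_below (1,2,1,3) = 10" "sym_blocks_below (0,2,2,3) = 9" "sym_blocks_below (1,2,2,3) = 14"
  "sym_blocks_below (2,2,2,3) = 16" "sym_blocks_below (0,2,3,3) = 9" "sym_blocks_below (1,2,3,3) = 14"
  "sym_blocks_below (2,2,3,3) = 16" "sym_blocks_below (0,3,0,3) = 4" "sym_blocks_below (0,3,1,3) = 7"
  "sym_blocks_below (1,3,1,3) = 10" "sym_blocks_below (0,3,2,3) = 9" "sym_blocks_below (1,3,2,3) = 14"
  "sym_blocks_below (2,3,2,3) = 16" "sym_blocks_below (0,3,3,3) = 10" "sym_blocks_below (1,3,3,3) = 16"
  "sym_blocks_below (2,3,3,3) = 19" "sym_blocks_below (3,3,3,3) = 20" "sym_blocks_below (0,0,0,4) = 5"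
  "sym_blocks_below (0,0,1,4) = 5" "sym_blocks_below (0,0,2,4) = 5" "sym_blocks_below (0,0,3,4) = 5"
  "sym_blocks_below (0,0,4,4) = 5" "sym_blocks_below (0,1,0,4) = 5" "sym_blocks_below (0,1,1,4) = 9"
  "sym_blocks_below (1,1,1,4) = 13" "sym_blocks_below (0,1,2,4) = 9" "sym_blocks_below (1,1,2,4) = 13"
  "sym_blocks_below (0,1,3,4) = 9" "sym_blocks_below (1,1,3,4) = 13" "sym_blocks_below (0,1,4,4) = 9"
  "sym_blocks_below (1,1,4,4) = 13" "sym_blocks_below (0,2,0,4) = 5" "sym_blocks_below (0,2,1,4) = 9"
  "sym_blocks_below (1,2,1,4) = 13" "sym_blocks_below (0,2,2,4) = 12" "sym_blocks_below (1,2,2,4) = 19"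
  "sym_blocks_below (2,2,2,4) = 22" "sym_blocks_below (0,2,3,4) = 12" "sym_blocks_below (1,2,3,4) = 19"
  "sym_blocks_below (2,2,3,4) = 22" "sym_blocks_below (0,2,4,4) = 12" "sym_blocks_below (1,2,4,4) = 19"
  "sym_blocks_below (2,2,4,4) = 22" "sym_blocks_below (0,3,0,4) = 5" "sym_blocks_below (0,3,1,4) = 9"
  "sym_blocks_below (1,3,1,4) = 13" "sym_blocks_below (0,3,2,4) = 12" "sym_blocks_below (1,3,2,4) = 19"
  "sym_blocks_below (2,3,2,4) = 22" "sym_blocks_below (0,3,3,4) = 14" "sym_blocks_below (1,3,3,4) = 23"
  "sym_blocks_below (2,3,3,4) = 28" "sym_blocks_below (3,3,3,4) = 30" "sym_blocks_below (0,3,4,4) = 14"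
  "sym_blocks_below (1,3,4,4) = 23" "sym_blocks_below (2,3,4,4) = 28" "sym_blocks_below (3,3,4,4) = 30"
  "sym_blocks_below (0,4,0,4) = 5" "sym_blocks_below (0,4,1,4) = 9" "sym_blocks_below (1,4,1,4) = 13"
  "sym_blocks_below (0,4,2,4) = 12" "sym_blocks_below (1,4,2,4) = 19" "sym_blocks_below (2,4,2,4) = 22"
  "sym_blocks_below (0,4,3,4) = 14" "sym_blocks_below (1,4,3,4) = 23" "sym_blocks_below (2,4,3,4) = 28"
  "sym_blocks_below (3,4,3,4) = 30" "sym_blocks_below (0,4,4,4) = 15" "sym_blocks_below (1,4,4,4) = 25"
  "sym_blocks_below (2,4,4,4) = 31" "sym_blocks_below (3,4,4,4) = 34" "sym_blocks_below (4,4,4,4) = 35"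
  by (simp_all add: sym_blocks_below_list sym_block_list_def del: One_nat_def)

definition lower_count :: "block \<Rightarrow> nat" where
  "lower_count m = card {(s, g). s \<in> sym_blocks \<and> g \<in> mono_blocks \<and> s \<le> g \<and> g \<le> m}"

lemma finite_mono_blocks: "finite mono_blocks"
  unfolding set_mono_block_list[symmetric] by (rule finite_set)

lemma finite_sym_blocks: "finite sym_blocks"
  unfolding set_sym_block_list[symmetric] by (rule finite_set)

lemma lower_count_list:
  "lower_count m = (\<Sum>g\<leftarrow>mono_block_list. if g \<le> m then sym_blocks_below g else 0)"
proof -
  have "{(s, g). s \<in> sym_blocks \<and> g \<in> mono_blocks \<and> s \<le> g \<and> g \<le> m}
        = prod.swap ` (SIGMA g:{g \<in> mono_blocks. g \<le> m}. {s \<in> sym_blocks. s \<le> g})"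
    by auto
  then have "lower_count m = card (SIGMA g:{g \<in> mono_blocks. g \<le> m}. {s \<in> sym_blocks. s \<le> g})"
    unfolding lower_count_def by (simp add: card_image swap_inj_on)
  also have "\<dots> = (\<Sum>g\<in>{g \<in> set mono_block_list. g \<le> m}. sym_blocks_below g)"
    using finite_mono_blocks finite_sym_blocks
    by (simp add: card_SigmaI sym_blocks_below_def set_mono_block_list)
  also have "\<dots> = (\<Sum>g\<leftarrow>mono_block_list. if g \<le> m then sym_blocks_below g else 0)"
    by (rule sum_filter_distinct_list[OF distinct_mono_block_list])
  finally show ?thesis .
qed

lemma lower_count_values [simp]:
  "lower_count (0,0,0,0) = 1" "lower_count (0,0,0,1) = 3" "lower_count (0,0,1,1) = 5"
  "lower_count (0,1,0,1) = 5" "lower_count (0,1,1,1) = 10" "lower_count (1,1,1,1) = 14"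
  "lower_count (0,0,0,2) = 6" "lower_count (0,0,1,2) = 11" "lower_count (0,0,2,2) = 14"
  "lower_count (0,1,0,2) = 11" "lower_count (0,1,1,2) = 24" "lower_count (1,1,1,2) = 35"
  "lower_count (0,1,2,2) = 32" "lower_count (1,1,2,2) = 50" "lower_count (0,2,0,2) = 14"
  "lower_count (0,2,1,2) = 32" "lower_count (1,2,1,2) = 50" "lower_count (0,2,2,2) = 46"
  "lower_count (1,2,2,2) = 80" "lower_count (2,2,2,2) = 90" "lower_count (0,0,0,3) = 10"
  "lower_count (0,0,1,3) = 19" "lower_count (0,0,2,3) = 26" "lower_count (0,0,3,3) = 30"
  "lower_count (0,1,0,3) = 19" "lower_count (0,1,1,3) = 43" "lower_count (1,1,1,3) = 64"
  "lower_count (0,1,2,3) = 62" "lower_count (1,1,2,3) = 100" "lower_count (0,1,3,3) = 73"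
  "lower_count (1,1,3,3) = 121" "lower_count (0,2,0,3) = 26" "lower_count (0,2,1,3) = 62"
  "lower_count (1,2,1,3) = 100" "lower_count (0,2,2,3) = 96" "lower_count (1,2,2,3) = 174"
  "lower_count (2,2,2,3) = 200" "lower_count (0,2,3,3) = 116" "lower_count (1,2,3,3) = 218"
  "lower_count (2,2,3,3) = 260" "lower_count (0,3,0,3) = 30" "lower_count (0,3,1,3) = 73"
  "lower_count (1,3,1,3) = 121" "lower_count (0,3,2,3) = 116" "lower_count (1,3,2,3) = 218"
  "lower_count (2,3,2,3) = 260" "lower_count (0,3,3,3) = 146" "lower_count (1,3,3,3) = 288"
  "lower_count (2,3,3,3) = 365" "lower_count (3,3,3,3) = 385" "lower_count (0,0,0,4) = 15"
  "lower_count (0,0,1,4) = 29" "lower_count (0,0,2,4) = 41" "lower_count (0,0,3,4) = 50"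
  "lower_count (0,0,4,4) = 55" "lower_count (0,1,0,4) = 29" "lower_count (0,1,1,4) = 67"
  "lower_count (1,1,1,4) = 101" "lower_count (0,1,2,4) = 100" "lower_count (1,1,2,4) = 164"
  "lower_count (0,1,3,4) = 125" "lower_count (1,1,3,4) = 212" "lower_count (0,1,4,4) = 139"
  "lower_count (1,1,4,4) = 239" "lower_count (0,2,0,4) = 41" "lower_count (0,2,1,4) = 100"
  "lower_count (1,2,1,4) = 164" "lower_count (0,2,2,4) = 160" "lower_count (1,2,2,4) = 296"
  "lower_count (2,2,2,4) = 344" "lower_count (0,2,3,4) = 206" "lower_count (1,2,3,4) = 398"
  "lower_count (2,2,3,4) = 484" "lower_count (0,2,4,4) = 232" "lower_count (1,2,4,4) = 456"
  "lower_count (2,2,4,4) = 564" "lower_count (0,3,0,4) = 50" "lower_count (0,3,1,4) = 125"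
  "lower_count (1,3,1,4) = 212" "lower_count (0,3,2,4) = 206" "lower_count (1,3,2,4) = 398"
  "lower_count (2,3,2,4) = 484" "lower_count (0,3,3,4) = 276" "lower_count (1,3,3,4) = 563"
  "lower_count (2,3,3,4) = 734" "lower_count (3,3,3,4) = 784" "lower_count (0,3,4,4) = 316"
  "lower_count (1,3,4,4) = 658" "lower_count (2,3,4,4) = 879" "lower_count (3,3,4,4) = 959"
  "lower_count (0,4,0,4) = 55" "lower_count (0,4,1,4) = 139" "lower_count (1,4,1,4) = 239"
  "lower_count (0,4,2,4) = 232" "lower_count (1,4,2,4) = 456" "lower_count (2,4,2,4) = 564"
  "lower_count (0,4,3,4) = 316" "lower_count (1,4,3,4) = 658" "lower_count (2,4,3,4) = 879"
  "lower_count (3,4,3,4) = 959" "lower_count (0,4,4,4) = 371" "lower_count (1,4,4,4) = 793"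
  "lower_count (2,4,4,4) = 1095" "lower_count (3,4,4,4) = 1239" "lower_count (4,4,4,4) = 1274"
  by (simp_all add: lower_count_list mono_block_list_def del: One_nat_def)

definition upper_count :: "block \<Rightarrow> nat" where
  "upper_count m = card {(g, s). g \<in> mono_blocks \<and> s \<in> sym_blocks \<and> m \<le> g \<and> g \<le> s}"

text \<open>Fixing the middle blocks \<open>g\<^sub>2\<close> and \<open>g\<^sub>3\<close> decouples \<open>(s\<^sub>0, g\<^sub>1)\<close> from \<open>(g\<^sub>4, s\<^sub>5)\<close>.\<close>

lemma card_block_labellings:
  "card block_labellings = (\<Sum>g2\<in>mono_blocks. \<Sum>g3\<in>mono_blocks.
     lower_count (inf (inf g2 (swap g2)) g3) * upper_count (sup (sup g2 (swap g2)) g3))"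
proof -
  define lower where "lower = (\<lambda>(g2, g3). {(s0, g1). s0 \<in> sym_blocks \<and> g1 \<in> mono_blocks \<and> s0 \<le> g1 \<and>
    g1 \<le> inf (inf g2 (swap g2)) g3})"
  define upper where "upper = (\<lambda>(g2, g3). {(g4, s5). g4 \<in> mono_blocks \<and> s5 \<in> sym_blocks \<and>
    sup (sup g2 (swap g2)) g3 \<le> g4 \<and> g4 \<le> s5})"
  define assemble :: "(block \<times> block) \<times> (block \<times> block) \<times> (block \<times> block) \<Rightarrow> labelling"
    where "assemble = (\<lambda>((g2, g3), (s0, g1), (g4, s5)). (s0, g1, g2, g3, g4, s5))"
  define disassemble :: "labelling \<Rightarrow> (block \<times> block) \<times> (block \<times> block) \<times> (block \<times> block)"
    where "disassemble = (\<lambda>(s0, g1, g2, g3, g4, s5). ((g2, g3), (s0, g1), (g4, s5)))"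
  let ?S = "SIGMA p:mono_blocks \<times> mono_blocks. lower p \<times> upper p"
  have mem_S: "((g2, g3), (s0, g1), (g4, s5)) \<in> ?S \<longleftrightarrow> (s0, g1, g2, g3, g4, s5) \<in> block_labellings"
    for s0 g1 g2 g3 g4 s5
    by (auto simp: lower_def upper_def block_labellings_def)
  have "bij_betw assemble ?S block_labellings"
  proof (rule bij_betw_byWitness[where f' = disassemble])
    show "\<forall>x\<in>?S. disassemble (assemble x) = x" "\<forall>v\<in>block_labellings. assemble (disassemble v) = v"
      by (auto simp: assemble_def disassemble_def)
    show "assemble ` ?S \<subseteq> block_labellings"
    proof (rule image_subsetI)
      fix x assume "x \<in> ?S"
      moreover obtain g2 g3 s0 g1 g4 s5 where "x = ((g2, g3), (s0, g1), (g4, s5))"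
        by (metis prod.exhaust)
      ultimately show "assemble x \<in> block_labellings"
        by (simp only: mem_S assemble_def prod.case)
    qed
    show "disassemble ` block_labellings \<subseteq> ?S"
    proof (rule image_subsetI)
      fix v assume "v \<in> block_labellings"
      moreover obtain s0 g1 g2 g3 g4 s5 where "v = (s0, g1, g2, g3, g4, s5)"
        by (metis prod.exhaust)
      ultimately show "disassemble v \<in> ?S"
        by (simp only: mem_S disassemble_def prod.case)
    qed
  qed
  then have "card block_labellings = card ?S"
    by (rule bij_betw_same_card[symmetric])
  also have "\<dots> = (\<Sum>p\<in>mono_blocks \<times> mono_blocks. card (lower p) * card (upper p))"
  proof -
    have "lower p \<subseteq> sym_blocks \<times> mono_blocks" "upper p \<subseteq> mono_blocks \<times> sym_blocks" for p
      by (cases p; force simp: lower_def upper_def)+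
    then have "finite (lower p \<times> upper p)" for p
      using finite_mono_blocks finite_sym_blocks by (meson finite_SigmaI finite_subset)
    then show ?thesis
      using finite_mono_blocks by (simp add: card_SigmaI card_cartesian_product)
  qed
  also have "\<dots> = (\<Sum>g2\<in>mono_blocks. \<Sum>g3\<in>mono_blocks.
     lower_count (inf (inf g2 (swap g2)) g3) * upper_count (sup (sup g2 (swap g2)) g3))"
    by (simp add: sum.cartesian_product lower_def upper_def lower_count_def upper_count_def case_prod_unfold)
  finally show ?thesis .
qed

text \<open>Complementing both the point and the value reverses the order on blocks.\<close>

definition dual :: "block \<Rightarrow> block" where
  "dual = (\<lambda>(a, b, c, d). (4 - d, 4 - b, 4 - c, 4 - a))"

lemma mono_blocks_bounded: "g \<in> mono_blocks \<Longrightarrow> g \<le> (4, 4, 4, 4)"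
  by (auto simp: mono_blocks_def)

lemma dual_dual: "g \<le> (4, 4, 4, 4) \<Longrightarrow> dual (dual g) = g"
  by (cases g) (auto simp: dual_def)

lemma dual_le_dual_iff: "g \<le> (4, 4, 4, 4) \<Longrightarrow> h \<le> (4, 4, 4, 4) \<Longrightarrow> dual g \<le> dual h \<longleftrightarrow> h \<le> g"
  by (cases g; cases h) (simp add: dual_def le_diff_iff' conj_ac)

lemma le_dual_iff: "g \<le> (4, 4, 4, 4) \<Longrightarrow> h \<le> (4, 4, 4, 4) \<Longrightarrow> g \<le> dual h \<longleftrightarrow> h \<le> dual g"
  by (cases g; cases h) (auto simp: dual_def)

lemma dual_mono_blocks: "g \<in> mono_blocks \<Longrightarrow> dual g \<in> mono_blocks"
  by (cases g) (auto simp: mono_blocks_def dual_def)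

lemma dual_sym_blocks: "g \<in> sym_blocks \<Longrightarrow> dual g \<in> sym_blocks"
  by (cases g) (auto simp: sym_blocks_def dual_def)

lemma sym_blocks_mono_blocks: "g \<in> sym_blocks \<Longrightarrow> g \<in> mono_blocks"
  by (auto simp: sym_blocks_def mono_blocks_def)

lemma upper_count_dual:
  assumes m: "m \<le> (4, 4, 4, 4)"
  shows "upper_count m = lower_count (dual m)"
proof -
  let ?U = "{(g, s). g \<in> mono_blocks \<and> s \<in> sym_blocks \<and> m \<le> g \<and> g \<le> s}"
  let ?L = "{(s, g). s \<in> sym_blocks \<and> g \<in> mono_blocks \<and> s \<le> g \<and> g \<le> dual m}"
  have bounded: "g \<le> (4, 4, 4, 4)" "s \<le> (4, 4, 4, 4)" if "g \<in> mono_blocks" "s \<in> sym_blocks" for g s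
    using that by (simp_all add: mono_blocks_bounded sym_blocks_mono_blocks)
  have "bij_betw (\<lambda>(g, s). (dual s, dual g)) ?U ?L"
  proof (rule bij_betw_byWitness[where f' = "\<lambda>(s, g). (dual g, dual s)"])
    show "\<forall>x\<in>?U. (\<lambda>(s, g). (dual g, dual s)) ((\<lambda>(g, s). (dual s, dual g)) x) = x"
      using bounded by (auto simp: dual_dual)
    show "\<forall>y\<in>?L. (\<lambda>(g, s). (dual s, dual g)) ((\<lambda>(s, g). (dual g, dual s)) y) = y"
      using bounded by (auto simp: dual_dual)
    have "dual m \<le> (4, 4, 4, 4)" "dual (dual m) = m"
      using m by (cases m; simp add: dual_def)+
    then show "(\<lambda>(g, s). (dual s, dual g)) ` ?U \<subseteq> ?L" "(\<lambda>(s, g). (dual g, dual s)) ` ?L \<subseteq> ?U"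
      using bounded m by (auto simp: dual_le_dual_iff le_dual_iff dual_mono_blocks dual_sym_blocks)
  qed
  then show ?thesis
    unfolding upper_count_def lower_count_def by (rule bij_betw_same_card)
qed

lemma swap_mono_blocks: "g \<in> mono_blocks \<Longrightarrow> swap g \<in> mono_blocks"
  by (cases g) (auto simp: mono_blocks_def)

definition middle_count :: "block \<Rightarrow> nat" where
  "middle_count g2 = (\<Sum>g3\<leftarrow>mono_block_list.
     lower_count (inf (inf g2 (swap g2)) g3) * lower_count (dual (sup (sup g2 (swap g2)) g3)))"

lemma card_block_labellings_value: "card block_labellings = 22062570"
proof -
  have "sup (sup g2 (swap g2)) g3 \<le> (4, 4, 4, 4)" if "g2 \<in> mono_blocks" "g3 \<in> mono_blocks" for g2 g3
    using that by (simp add: mono_blocks_bounded swap_mono_blocks)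
  then have "card block_labellings = (\<Sum>g2\<leftarrow>mono_block_list. middle_count g2)"
    unfolding card_block_labellings set_mono_block_list[symmetric] middle_count_def
    by (simp add: upper_count_dual sum_list_distinct_conv_sum_set[OF distinct_mono_block_list])
  also have "\<dots> = 22062570"
    by (simp add: mono_block_list_def middle_count_def dual_def inf_min sup_max One_nat_def[symmetric] del: One_nat_def)
  finally show ?thesis .
qed

lemma finite_block_labellings: "finite block_labellings"
proof (rule finite_subset)
  show "block_labellings \<subseteq> sym_blocks \<times> mono_blocks \<times> mono_blocks \<times> mono_blocks \<times> mono_blocks \<times> sym_blocks"
    by (auto simp: block_labellings_def)
qed (simp add: finite_mono_blocks finite_sym_blocks)

lemma finite_Phi6: "finite (Phi 6 sigma6)"
proof -
  have "finite (chains4 (Phi 6 sigma6))"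
    using bij_betw_finite[OF bij_betw_labelling_of] finite_block_labellings by blast
  moreover have "Phi 6 sigma6 \<subseteq> chain_nth 0 ` chains4 (Phi 6 sigma6)"
  proof
    fix a assume "a \<in> Phi 6 sigma6"
    then have "(a, a, a, a) \<in> chains4 (Phi 6 sigma6)"
      by (simp add: chains4_def)
    then show "a \<in> chain_nth 0 ` chains4 (Phi 6 sigma6)"
      by (force simp: chain_nth_def)
  qed
  ultimately show ?thesis
    using finite_surj by blast
qed

theorem mainTheorem5:
  defines "P \<equiv> Phi 6 (cycle_of_list [1,2] \<circ> cycle_of_list [3,4,5,6])"
  shows "phi 9 (cycle_of_list [1,2] \<circ> cycle_of_list [3,4,5] \<circ> cycle_of_list [6,7,8,9])
           = entry_sum P (mpow P (incidence P) 3)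
       \<and> phi 9 (cycle_of_list [1,2] \<circ> cycle_of_list [3,4,5] \<circ> cycle_of_list [6,7,8,9])
           = card {(a1, a2, a3, a4). a1 \<in> P \<and> a2 \<in> P \<and> a3 \<in> P \<and> a4 \<in> P
                                      \<and> a1 \<le> a2 \<and> a2 \<le> a3 \<and> a3 \<le> a4}
       \<and> phi 9 (cycle_of_list [1,2] \<circ> cycle_of_list [3,4,5] \<circ> cycle_of_list [6,7,8,9])
           = 22062570"
proof -
  have P: "P = Phi 6 sigma6"
    by (simp add: P_def sigma6_def)
  have \<pi>: "cycle_of_list [1, 2] \<circ> cycle_of_list [3, 4, 5] \<circ> cycle_of_list [6, 7, 8, 9] = pi9"
    by (simp add: pi9_def)
  have chains: "{(a1, a2, a3, a4). a1 \<in> P \<and> a2 \<in> P \<and> a3 \<in> P \<and> a4 \<in> P \<and> a1 \<le> a2 \<and> a2 \<le> a3 \<and> a3 \<le> a4}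
      = chains4 P"
    by (simp add: chains4_def)
  have phi: "phi 9 pi9 = card (chains4 P)"
    unfolding P phi_def by (rule bij_betw_same_card[OF bij_betw_glue, symmetric])
  have "card (chains4 P) = 22062570"
    unfolding P using bij_betw_same_card[OF bij_betw_labelling_of] card_block_labellings_value by simp
  moreover have "entry_sum P (mpow P (incidence P) 3) = card (chains4 P)"
    unfolding P by (rule entry_sum_incidence_cube[OF finite_Phi6])
  ultimately show ?thesis
    unfolding \<pi> chains phi by simp
qed

end
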